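(* Let $C\subseteq U^{\ge0}$ be a right coideal, $\beta\in Q$ and $x\in C_\beta\setminus\{0\}$. Let $J$ be a left coideal of $U^{\ge0}$ which is homogeneous with respect to the decomposition $U^{\ge0}=\bigoplus_{\alpha,\gamma\in Q}U^+_\alpha K_\gamma$. Let $\gamma\in Q$ be maximal with respect to $\prec$ such that $\mathrm{pr}_{(\gamma,\beta)}(x)\notin J$. Then $K_{\beta+\gamma}\in C$.
   Context: Setting: $\mathfrak g$ finite-dimensional complex semisimple, simple roots $\Pi$, invariant scalar product $(\cdot,\cdot)$, $Q=\mathbb Z\Pi$, $Q_+=\mathbb N_0\Pi$; $\gamma\prec\alpha$ means $\alpha-\gamma\in Q_+\setminus\{0\}$. $k$ field, $q\in k^\times$ not a root of unity; $U=U_q(\mathfrak g)$ as in Jantzen Ch. 4 with $\Delta(E_\alpha)=E_\alpha\otimes1+K_\alpha\otimes E_\alpha$, $\Delta(K_\alpha)=K_\alpha\otimes K_\alpha$; $U^+,U^0$ generated by $\{E_\alpha\},\{K_\alpha^{\pm1}\}$, $U^{\ge0}=U^+U^0$, $K_\beta=\prod K_\alpha^{n_\alpha}$, $U^+_\alpha=\{x\in U^+\,|\,K_\delta xK_\delta^{-1}=q^{(\delta,\alpha)}x\ \forall\delta\}$, projections $\mathrm{pr}_{(\alpha,\beta)}:U^{\ge0}\to U^+_\alpha K_\beta$. Right coideal: $\Delta(C)\subseteq C\otimes U^{\ge0}$; left coideal: $\Delta(J)\subseteq U^{\ge0}\otimes J$. $C_\beta=U^+K_\beta\cap C$. *)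

theory Defs
  imports Complex_Main
begin

text \<open>Simple roots are indexed by a finite type 'i; an element of the root lattice Q = Z Pi
is represented by its coefficient vector 'i => int (Pi is a basis of Q). The invariant scalar
product is given by its Gram matrix B i j = (alpha_i, alpha_j) on the simple roots.\<close>

type_synonym 'i rlat = "'i \<Rightarrow> int"

definition sroot :: "'i \<Rightarrow> 'i rlat" where
  "sroot i = (\<lambda>j. if j = i then 1 else 0)"

definition ip :: "('i::finite \<Rightarrow> 'i \<Rightarrow> int) \<Rightarrow> 'i rlat \<Rightarrow> 'i rlat \<Rightarrow> int" where
  "ip B a b = (\<Sum>i\<in>UNIV. \<Sum>j\<in>UNIV. a i * B i j * b j)"

text \<open>B is the Gram matrix of the simple roots of a finite-dimensional complex semisimple Lie
algebra with respect to an invariant (positive definite) scalar product for which (alpha,alpha)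
is an even integer and (alpha,beta) is an integer (Jantzen's normalization is an instance):
symmetric, positive definite, and the Cartan integers 2(alpha_i,alpha_j)/(alpha_i,alpha_i)
are non-positive integers for i ~= j.  (Such B are exactly these Gram matrices.)\<close>

definition semisimple_form :: "('i::finite \<Rightarrow> 'i \<Rightarrow> int) \<Rightarrow> bool" where
  "semisimple_form B \<longleftrightarrow>
     (\<forall>i j. B i j = B j i) \<and>
     (\<forall>i. 0 < B i i \<and> even (B i i)) \<and>
     (\<forall>i j. i \<noteq> j \<longrightarrow> B i j \<le> 0 \<and> B i i dvd 2 * B i j) \<and>
     (\<forall>v::'i \<Rightarrow> real. v \<noteq> (\<lambda>_. 0) \<longrightarrow>
        0 < (\<Sum>i\<in>UNIV. \<Sum>j\<in>UNIV. v i * real_of_int (B i j) * v j))"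

definition cartan :: "('i \<Rightarrow> 'i \<Rightarrow> int) \<Rightarrow> 'i \<Rightarrow> 'i \<Rightarrow> int" where
  "cartan B i j = 2 * B i j div B i i"

definition rprec :: "'i rlat \<Rightarrow> 'i rlat \<Rightarrow> bool" where
  "rprec g a \<longleftrightarrow> (\<forall>i. g i \<le> a i) \<and> g \<noteq> a"

definition qnum :: "'k::field \<Rightarrow> nat \<Rightarrow> 'k" where
  "qnum t n = (\<Sum>j<n. t powi (int n - 1 - 2 * int j))"

definition qfact :: "'k::field \<Rightarrow> nat \<Rightarrow> 'k" where
  "qfact t n = (\<Prod>m\<in>{1..n}. qnum t m)"

definition qbinom :: "'k::field \<Rightarrow> nat \<Rightarrow> nat \<Rightarrow> 'k" where
  "qbinom t n r = qfact t n / (qfact t r * qfact t (n - r))"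

text \<open>A monomial (w, gamma) stands for E_w K_gamma = E_{w_1} ... E_{w_n} K_gamma.
Elements are finitely supported coefficient functions.\<close>

type_synonym 'i mon = "'i list \<times> 'i rlat"

definition deg :: "'i list \<Rightarrow> 'i rlat" where
  "deg w = (\<lambda>j. int (length (filter (\<lambda>x. x = j) w)))"

definition supp :: "('m \<Rightarrow> 'k::zero) \<Rightarrow> 'm set" where
  "supp f = {m. f m \<noteq> 0}"

definition fin :: "('m \<Rightarrow> 'k::zero) set" where
  "fin = {f. finite (supp f)}"

definition mono :: "'m \<Rightarrow> 'm \<Rightarrow> 'k::{zero,one}" where
  "mono m = (\<lambda>n. if n = m then 1 else 0)"

text \<open>(E_w K_gamma)(E_v K_delta) = q^(gamma, deg v) E_{wv} K_{gamma+delta}\<close>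
definition mmul :: "('i::finite \<Rightarrow> 'i \<Rightarrow> int) \<Rightarrow> 'k::field \<Rightarrow> 'i mon \<Rightarrow> 'i mon \<Rightarrow> 'k \<times> 'i mon" where
  "mmul B q m n = (q powi ip B (snd m) (deg (fst n)),
                   (fst m @ fst n, \<lambda>j. snd m j + snd n j))"

definition tw_mult :: "('m \<Rightarrow> 'm \<Rightarrow> 'k::field \<times> 'm) \<Rightarrow> ('m \<Rightarrow> 'k) \<Rightarrow> ('m \<Rightarrow> 'k) \<Rightarrow> ('m \<Rightarrow> 'k)" where
  "tw_mult mm f g = (\<lambda>m. \<Sum>p\<in>supp f \<times> supp g.
      if snd (mm (fst p) (snd p)) = m then f (fst p) * g (snd p) * fst (mm (fst p) (snd p)) else 0)"

definition umult :: "('i::finite \<Rightarrow> 'i \<Rightarrow> int) \<Rightarrow> 'k::field \<Rightarrow> ('i mon \<Rightarrow> 'k) \<Rightarrow> ('i mon \<Rightarrow> 'k) \<Rightarrow> ('i mon \<Rightarrow> 'k)" where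
  "umult B q = tw_mult (mmul B q)"

definition Egen :: "'i \<Rightarrow> 'i mon \<Rightarrow> 'k::field" where
  "Egen i = mono ([i], \<lambda>_. 0)"

definition Kel :: "'i rlat \<Rightarrow> 'i mon \<Rightarrow> 'k::field" where
  "Kel g = mono ([], g)"

definition lspan :: "('m \<Rightarrow> 'k::field) set \<Rightarrow> ('m \<Rightarrow> 'k) set" where
  "lspan S = {f. \<exists>A c. finite A \<and> A \<subseteq> S \<and> f = (\<lambda>m. \<Sum>v\<in>A. c v * v m)}"

definition subsp :: "('m \<Rightarrow> 'k::field) set \<Rightarrow> bool" where
  "subsp S \<longleftrightarrow> S \<subseteq> fin \<and> (\<lambda>_. 0) \<in> S \<and>
     (\<forall>f\<in>S. \<forall>g\<in>S. (\<lambda>m. f m + g m) \<in> S) \<and> (\<forall>c. \<forall>f\<in>S. (\<lambda>m. c * f m) \<in> S)"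

definition serre :: "('i::finite \<Rightarrow> 'i \<Rightarrow> int) \<Rightarrow> 'k::field \<Rightarrow> 'i \<Rightarrow> 'i \<Rightarrow> 'i mon \<Rightarrow> 'k" where
  "serre B q i j = (let N = nat (1 - cartan B i j); qi = q powi (B i i div 2) in
     (\<lambda>m. \<Sum>r\<in>{0..N}. (-1) ^ r * qbinom qi N r *
          mono (replicate (N - r) i @ [j] @ replicate r i, \<lambda>_. 0) m))"

text \<open>The two-sided ideal I generated by the Serre elements; U^{>=0} = F / I.\<close>
definition serre_ideal :: "('i::finite \<Rightarrow> 'i \<Rightarrow> int) \<Rightarrow> 'k::field \<Rightarrow> ('i mon \<Rightarrow> 'k) set" where
  "serre_ideal B q = lspan {umult B q (umult B q (mono m1) (serre B q i j)) (mono m2)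
                           | m1 m2 i j. i \<noteq> j}"

definition tens :: "('m \<Rightarrow> 'k::field) \<Rightarrow> ('m \<Rightarrow> 'k) \<Rightarrow> ('m \<times> 'm \<Rightarrow> 'k)" where
  "tens f g = (\<lambda>p. f (fst p) * g (snd p))"

definition tmmul :: "('m \<Rightarrow> 'm \<Rightarrow> 'k::field \<times> 'm) \<Rightarrow> 'm \<times> 'm \<Rightarrow> 'm \<times> 'm \<Rightarrow> 'k \<times> ('m \<times> 'm)" where
  "tmmul mm a b = (fst (mm (fst a) (fst b)) * fst (mm (snd a) (snd b)),
                   (snd (mm (fst a) (fst b)), snd (mm (snd a) (snd b))))"

text \<open>Delta(E_i) = E_i (x) 1 + K_i (x) E_i, Delta(K_g) = K_g (x) K_g, multiplicative.\<close>
fun Dmon :: "('i::finite \<Rightarrow> 'i \<Rightarrow> int) \<Rightarrow> 'k::field \<Rightarrow> 'i list \<Rightarrow> 'i rlat \<Rightarrow> ('i mon \<times> 'i mon \<Rightarrow> 'k)" where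
  "Dmon B q [] g = tens (Kel g) (Kel g)"
| "Dmon B q (i # w) g = tw_mult (tmmul (mmul B q))
      (\<lambda>p. tens (Egen i) (Kel (\<lambda>_. 0)) p + tens (Kel (sroot i)) (Egen i) p)
      (Dmon B q w g)"

definition Delta :: "('i::finite \<Rightarrow> 'i \<Rightarrow> int) \<Rightarrow> 'k::field \<Rightarrow> ('i mon \<Rightarrow> 'k) \<Rightarrow> ('i mon \<times> 'i mon \<Rightarrow> 'k)" where
  "Delta B q f = (\<lambda>p. \<Sum>m\<in>supp f. f m * Dmon B q (fst m) (snd m) p)"

definition pr :: "'i rlat \<Rightarrow> 'i rlat \<Rightarrow> ('i mon \<Rightarrow> 'k::zero) \<Rightarrow> ('i mon \<Rightarrow> 'k)" where
  "pr a g f = (\<lambda>m. if deg (fst m) = a \<and> snd m = g then f m else 0)"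

text \<open>A subspace C of U^{>=0} = F/I corresponds to its preimage C' in F (a subspace containing I).
Delta(C) \<subseteq> C (x) U^{>=0} in U^{>=0} (x) U^{>=0} means Delta(C') \<subseteq> C' (x) F + F (x) I.\<close>

definition right_coideal :: "('i::finite \<Rightarrow> 'i \<Rightarrow> int) \<Rightarrow> 'k::field \<Rightarrow> ('i mon \<Rightarrow> 'k) set \<Rightarrow> bool" where
  "right_coideal B q C \<longleftrightarrow> subsp C \<and> serre_ideal B q \<subseteq> C \<and>
     (\<forall>c\<in>C. Delta B q c \<in> lspan ({tens a b | a b. a \<in> C \<and> b \<in> fin} \<union>
                                   {tens a b | a b. a \<in> fin \<and> b \<in> serre_ideal B q}))"

definition left_coideal :: "('i::finite \<Rightarrow> 'i \<Rightarrow> int) \<Rightarrow> 'k::field \<Rightarrow> ('i mon \<Rightarrow> 'k) set \<Rightarrow> bool" where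
  "left_coideal B q J \<longleftrightarrow> subsp J \<and> serre_ideal B q \<subseteq> J \<and>
     (\<forall>c\<in>J. Delta B q c \<in> lspan ({tens a b | a b. a \<in> fin \<and> b \<in> J} \<union>
                                   {tens a b | a b. a \<in> serre_ideal B q \<and> b \<in> fin}))"

definition homogeneous :: "('i mon \<Rightarrow> 'k::zero) set \<Rightarrow> bool" where
  "homogeneous J \<longleftrightarrow> (\<forall>c\<in>J. \<forall>a g. pr a g c \<in> J)"

end

theory Submission
  imports Defs "HOL-Library.Function_Algebras"
begin

text \<open>
  Choose a linear form \<phi> vanishing on J but not on pr_(\<gamma>,\<beta>) x. As J is homogeneous,
  \<psi> = \<phi> \<circ> pr_(\<gamma>,\<beta>) still vanishes on J, and (id \<otimes> \<psi>) \<Delta>(x) \<in> C because C is a right coideal.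
  Decompose x into its components pr_(\<alpha>,\<beta>) x. Since \<Delta>(E_w K_\<beta>) is K_(\<beta> + deg w) \<otimes> E_w K_\<beta>
  plus terms whose right factors have smaller E-degree, the component \<alpha> = \<gamma> contributes
  \<phi>(pr_(\<gamma>,\<beta>) x) K_(\<beta>+\<gamma>), components with \<alpha> not above \<gamma> contribute nothing, and for \<gamma> \<prec> \<alpha>
  the component lies in J by maximality of \<gamma>, so its contribution vanishes because J is a left
  coideal.
\<close>

lemma deg_Nil [simp]: "deg [] = (\<lambda>_. 0)"
  by (simp add: deg_def)

lemma deg_Cons: "deg (i # w) = (\<lambda>j. (if j = i then 1 else 0) + deg w j)"
  by (auto simp: deg_def)

lemma deg_nonneg: "0 \<le> deg w j"
  by (simp add: deg_def)

lemma deg_eq_0_imp_Nil: "deg w = (\<lambda>_. 0) \<Longrightarrow> w = []"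
proof (cases w)
  case (Cons i u)
  assume "deg w = (\<lambda>_. 0)"
  then have "deg w i = 0" by simp
  moreover have "deg w i = 1 + deg u i"
    using Cons by (simp add: deg_Cons)
  ultimately show ?thesis
    using deg_nonneg[of u i] by simp
qed

definition linear_form :: "(('m \<Rightarrow> 'k::field) \<Rightarrow> 'k) \<Rightarrow> bool" where
  "linear_form \<phi> \<longleftrightarrow>
     (\<forall>u w. \<phi> (\<lambda>n. u n + w n) = \<phi> u + \<phi> w) \<and> (\<forall>c u. \<phi> (\<lambda>n. c * u n) = c * \<phi> u)"

lemma linear_form_add: "linear_form \<phi> \<Longrightarrow> \<phi> (\<lambda>n. u n + w n) = \<phi> u + \<phi> w"
  unfolding linear_form_def by blast

lemma linear_form_scale: "linear_form \<phi> \<Longrightarrow> \<phi> (\<lambda>n. c * u n) = c * \<phi> u"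
  unfolding linear_form_def by blast

lemma linear_form_zero: "linear_form \<phi> \<Longrightarrow> \<phi> (\<lambda>_. 0) = 0"
  using linear_form_scale[of \<phi> 0 "\<lambda>_. 0"] by simp

lemma linear_form_sum:
  assumes "linear_form \<phi>"
  shows "\<phi> (\<lambda>n. \<Sum>a\<in>A. c a * h a n) = (\<Sum>a\<in>A. c a * \<phi> (h a))"
proof (induction A rule: infinite_finite_induct)
  case (insert a A)
  then show ?case
    by (simp add: linear_form_add[OF assms] linear_form_scale[OF assms])
qed (simp_all add: linear_form_zero[OF assms])

lemma pr_add: "pr a g (\<lambda>n. u n + w n :: 'k::comm_monoid_add) = (\<lambda>n. pr a g u n + pr a g w n)"
  by (simp add: pr_def fun_eq_iff)

lemma pr_scale: "pr a g (\<lambda>n. c * u n :: 'k::mult_zero) = (\<lambda>n. c * pr a g u n)"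
  by (simp add: pr_def fun_eq_iff)

lemma linear_form_comp_pr: "linear_form \<phi> \<Longrightarrow> linear_form (\<lambda>u. \<phi> (pr a g u))"
  by (simp add: linear_form_def pr_add pr_scale)

lemma separating_linear_form:
  fixes W :: "('m \<Rightarrow> 'k::field) set"
  assumes "subsp W" "v \<notin> W"
  obtains \<phi> where "linear_form \<phi>" "\<forall>w\<in>W. \<phi> w = 0" "\<phi> v \<noteq> 0"
proof -
  interpret vector_space_pair "\<lambda>c (u::'m\<Rightarrow>'k) n. c * u n" "(*) :: 'k \<Rightarrow> 'k \<Rightarrow> 'k"
    by unfold_locales (auto simp: fun_eq_iff algebra_simps)
  have "vs1.subspace W"
    using assms(1) unfolding subsp_def vs1.subspace_def by (simp add: plus_fun_def zero_fun_def)
  obtain B where B: "B \<subseteq> W" "vs1.independent B" "W \<subseteq> vs1.span B"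
    using vs1.maximal_independent_subset by blast
  have "v \<notin> vs1.span B"
    using assms(2) B(1) \<open>vs1.subspace W\<close> vs1.span_minimal by blast
  then have "vs1.independent (insert v B)"
    using B(2) by (rule vs1.independent_insertI)
  then obtain \<phi> where \<phi>: "Vector_Spaces.linear (\<lambda>c u n. c * u n) (*) \<phi>"
    "\<forall>b\<in>insert v B. \<phi> b = (if b = v then 1 else 0)"
    using linear_independent_extend[of "insert v B" "\<lambda>b. if b = v then 1 else 0"] by blast
  interpret Vector_Spaces.linear "\<lambda>c (u::'m\<Rightarrow>'k) n. c * u n" "(*) :: 'k \<Rightarrow> 'k \<Rightarrow> 'k" \<phi>
    by (fact \<phi>(1))
  show thesis
  proof
    show "linear_form \<phi>"
      unfolding linear_form_def using add scale by (simp add: plus_fun_def)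
    show "\<forall>w\<in>W. \<phi> w = 0"
      using eq_0_on_span[of B] \<phi>(2) \<open>v \<notin> vs1.span B\<close> B(3) vs1.span_base by fastforce
    show "\<phi> v \<noteq> 0"
      using \<phi>(2) by simp
  qed
qed

lemma subsp_add: "subsp S \<Longrightarrow> f \<in> S \<Longrightarrow> g \<in> S \<Longrightarrow> (\<lambda>m. f m + g m) \<in> S"
  unfolding subsp_def by blast

lemma subsp_scale: "subsp S \<Longrightarrow> f \<in> S \<Longrightarrow> (\<lambda>m. c * f m) \<in> S"
  unfolding subsp_def by blast

lemma subsp_zero: "subsp S \<Longrightarrow> (\<lambda>_. 0) \<in> S"
  unfolding subsp_def by blast

lemma subsp_sum:
  assumes "subsp S" "\<forall>a\<in>A. f a \<in> S"
  shows "(\<lambda>m. \<Sum>a\<in>A. f a m) \<in> S"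
  using assms(2)
proof (induction A rule: infinite_finite_induct)
  case (insert a A)
  then show ?case
    using subsp_add[OF assms(1), of "f a"] by simp
qed (simp_all add: subsp_zero[OF assms(1)])

lemma subsp_cancel:
  assumes "subsp S" "(\<lambda>m. c * u m + r m) \<in> S" "r \<in> S" "c \<noteq> 0"
  shows "u \<in> S"
proof -
  have "(\<lambda>m. (-1) * r m) \<in> S"
    using subsp_scale[OF assms(1,3)] .
  then have "(\<lambda>m. inverse c * ((c * u m + r m) + (-1) * r m)) \<in> S"
    by (rule subsp_scale[OF assms(1) subsp_add[OF assms(1,2)]])
  then show ?thesis
    using assms(4) by (simp add: mult.assoc[symmetric])
qed

definition Delta_E :: "'i \<Rightarrow> 'i mon \<times> 'i mon \<Rightarrow> 'k::field" where
  "Delta_E i = (\<lambda>p. tens (Egen i) (Kel (\<lambda>_. 0)) p + tens (Kel (sroot i)) (Egen i) p)"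

lemma Dmon_Cons: "Dmon B q (i # w) g = tw_mult (tmmul (mmul B q)) (Delta_E i) (Dmon B q w g)"
  by (simp add: Delta_E_def)

lemma supp_Delta_E:
  "supp (Delta_E i) \<subseteq> {(([i], \<lambda>_. 0), ([], \<lambda>_. 0)), (([], sroot i), ([i], \<lambda>_. 0))}"
  by (auto simp: supp_def Delta_E_def tens_def Egen_def Kel_def mono_def split: if_splits)

lemma Delta_E_K_E [simp]: "Delta_E i (([], sroot i), ([i], \<lambda>_. 0)) = 1"
  by (simp add: Delta_E_def tens_def Egen_def Kel_def mono_def)

lemma finite_supp_Delta_E: "finite (supp (Delta_E i))"
  using finite_subset[OF supp_Delta_E] by simp

lemma supp_tw_mult:
  "supp (tw_mult mm f g) \<subseteq> (\<lambda>p. snd (mm (fst p) (snd p))) ` (supp f \<times> supp g)"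
proof
  fix m
  assume m: "m \<in> supp (tw_mult mm f g)"
  show "m \<in> (\<lambda>p. snd (mm (fst p) (snd p))) ` (supp f \<times> supp g)"
  proof (rule ccontr)
    assume "m \<notin> (\<lambda>p. snd (mm (fst p) (snd p))) ` (supp f \<times> supp g)"
    then have "tw_mult mm f g m = 0"
      unfolding tw_mult_def by (intro sum.neutral) force
    with m show False
      by (simp add: supp_def)
  qed
qed

lemma finite_supp_Dmon: "finite (supp (Dmon B q w g))"
proof (induction w)
  case Nil
  have "supp (Dmon B q [] g) \<subseteq> {(([], g), ([], g))}"
    by (auto simp: supp_def tens_def Kel_def mono_def split: if_splits)
  then show ?case
    by (rule finite_subset) simp
next
  case (Cons i w)
  then show ?case
    unfolding Dmon_Cons using finite_supp_Delta_E
    by (intro finite_subset[OF supp_tw_mult] finite_imageI finite_cartesian_product)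
qed

lemma tmmul_Delta_E_cases:
  fixes B :: "'i::finite \<Rightarrow> 'i \<Rightarrow> int" and q :: "'k::field"
  assumes "p \<in> supp (Delta_E i :: _ \<Rightarrow> 'k)" "snd (tmmul (mmul B q) p (k', n')) = (k, n)"
  shows "p = (([i], \<lambda>_. 0), ([], \<lambda>_. 0)) \<and> fst k = i # fst k' \<and> n = n'
    \<or> p = (([], sroot i), ([i], \<lambda>_. 0)) \<and> fst k = fst k' \<and> fst n = i # fst n' \<and> snd n = snd n'"
  using subsetD[OF supp_Delta_E assms(1)] assms(2)
  by (auto simp: tmmul_def mmul_def)

lemma Dmon_nonzero_imp:
  fixes B :: "'i::finite \<Rightarrow> 'i \<Rightarrow> int" and q :: "'k::field"
  assumes "Dmon B q w g (k, n) \<noteq> 0"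
  shows "(\<forall>j. deg (fst n) j \<le> deg w j) \<and> snd n = g"
  using assms
proof (induction w arbitrary: k n)
  case Nil
  then show ?case
    by (auto simp: tens_def Kel_def mono_def split: if_splits)
next
  case (Cons i w)
  then have "(k, n) \<in> supp (Dmon B q (i # w) g)"
    by (simp add: supp_def)
  then obtain p k' n' where p: "p \<in> supp (Delta_E i :: _ \<Rightarrow> 'k)" "(k', n') \<in> supp (Dmon B q w g)"
    and kn: "snd (tmmul (mmul B q) p (k', n')) = (k, n)"
    using supp_tw_mult unfolding Dmon_Cons by fastforce
  have le: "deg (fst n') j \<le> deg w j" for j
    using Cons.IH p(2) by (simp add: supp_def)
  have "snd n' = g"
    using Cons.IH p(2) by (simp add: supp_def)
  then show ?case
    using tmmul_Delta_E_cases[OF p(1) kn] by (auto simp: deg_Cons intro: order.trans[OF le])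
qed

lemma Dmon_top_degree:
  fixes B :: "'i::finite \<Rightarrow> 'i \<Rightarrow> int" and q :: "'k::field"
  assumes "deg (fst n) = deg w"
  shows "Dmon B q w g (k, n) = (if k = ([], \<lambda>j. g j + deg w j) \<and> n = (w, g) then 1 else 0)"
  using assms
proof (induction w arbitrary: k n)
  case Nil
  then have "fst n = []"
    using deg_eq_0_imp_Nil by simp
  then show ?case
    by (cases n) (auto simp: tens_def Kel_def mono_def)
next
  case (Cons i w)
  define D where "D = Dmon B q w g"
  define top :: "('i mon \<times> 'i mon) \<times> ('i mon \<times> 'i mon)" where
    "top = ((([], sroot i), ([i], \<lambda>_. 0)), (([], \<lambda>j. g j + deg w j), (w, g)))"
  define F where "F = (\<lambda>p. if snd (tmmul (mmul B q) (fst p) (snd p)) = (k, n)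
      then Delta_E i (fst p) * D (snd p) * fst (tmmul (mmul B q) (fst p) (snd p)) else 0)"
  have D_top: "D (snd top) = 1"
    unfolding D_def top_def using Cons.IH[of "(w, g)"] by simp
  have other_terms: "F p = 0" if "p \<in> supp (Delta_E i :: _ \<Rightarrow> 'k) \<times> supp D" "p \<noteq> top" for p
  proof (rule ccontr)
    assume "F p \<noteq> 0"
    obtain p1 k' n' where p: "p = (p1, (k', n'))"
      by (cases p) auto
    have kn: "snd (tmmul (mmul B q) p1 (k', n')) = (k, n)" and D: "D (k', n') \<noteq> 0"
      using \<open>F p \<noteq> 0\<close> p unfolding F_def by (auto split: if_splits)
    have le: "deg (fst n') j \<le> deg w j" for j
      using Dmon_nonzero_imp D unfolding D_def by blast
    have p1: "p1 \<in> supp (Delta_E i :: _ \<Rightarrow> 'k)"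
      using that(1) p by simp
    show False
      using tmmul_Delta_E_cases[OF p1 kn]
    proof (elim disjE conjE)
      assume "n = n'"
      then have "deg (fst n') i = 1 + deg w i"
        using Cons.prems by (simp add: deg_Cons)
      then show False
        using le[of i] by simp
    next
      assume "p1 = (([], sroot i), ([i], \<lambda>_. 0))" "fst n = i # fst n'"
      then have "deg (fst n') = deg w"
        using Cons.prems by (simp add: deg_Cons fun_eq_iff)
      then have "(k', n') = snd top"
        using D Cons.IH[of n' k'] unfolding D_def top_def by (auto split: if_splits)
      then show False
        using that(2) p \<open>p1 = _\<close> unfolding top_def by simp
    qed
  qed
  have "finite (supp (Delta_E i :: _ \<Rightarrow> 'k) \<times> supp D)"
    unfolding D_def by (rule finite_cartesian_product[OF finite_supp_Delta_E finite_supp_Dmon])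
  moreover have "top \<in> supp (Delta_E i :: _ \<Rightarrow> 'k) \<times> supp D"
    using D_top by (simp add: supp_def top_def)
  ultimately have "Dmon B q (i # w) g (k, n) = sum F {top}"
    unfolding Dmon_Cons tw_mult_def F_def[symmetric] D_def[symmetric]
    using other_terms by (intro sum.mono_neutral_right) auto
  also have "\<dots> = (if k = ([], \<lambda>j. g j + deg (i # w) j) \<and> n = (i # w, g) then 1 else 0)"
    using D_top Delta_E_K_E[of i, unfolded sroot_def]
    by (auto simp: F_def top_def tmmul_def mmul_def ip_def deg_Cons sroot_def fun_eq_iff)
  finally show ?case .
qed

lemma pr_Dmon_slice_top:
  fixes B :: "'i::finite \<Rightarrow> 'i \<Rightarrow> int" and q :: "'k::field"
  assumes "deg w = \<gamma>"
  shows "pr \<gamma> g (\<lambda>n. Dmon B q w g (k, n)) = (if k = ([], \<lambda>j. g j + \<gamma> j) then mono (w, g) else (\<lambda>_. 0))"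
  using assms by (auto simp: pr_def mono_def Dmon_top_degree fun_eq_iff)

lemma pr_Dmon_slice_below:
  fixes B :: "'i::finite \<Rightarrow> 'i \<Rightarrow> int" and q :: "'k::field"
  assumes "\<not> (\<forall>j. \<gamma> j \<le> deg w j)"
  shows "pr \<gamma> \<beta> (\<lambda>n. Dmon B q w g (k, n)) = (\<lambda>_. 0)"
proof
  fix n
  show "pr \<gamma> \<beta> (\<lambda>n. Dmon B q w g (k, n)) n = 0"
    using assms Dmon_nonzero_imp[of B q w g k n] by (auto simp: pr_def)
qed

lemma supp_pr: "supp (pr a g f) = {m \<in> supp f. deg (fst m) = a \<and> snd m = g}"
  by (auto simp: supp_def pr_def)

lemma sum_mono_expansion:
  fixes f :: "'m \<Rightarrow> 'k::field"
  assumes "finite (supp f)"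
  shows "(\<lambda>n. \<Sum>m\<in>supp f. f m * mono m n) = f"
proof
  fix n
  have "(\<Sum>m\<in>supp f. f m * mono m n) = (\<Sum>m\<in>supp f. if n = m then f m else 0)"
    by (rule sum.cong) (auto simp: mono_def)
  then show "(\<Sum>m\<in>supp f. f m * mono m n) = f n"
    using assms by (simp add: supp_def)
qed

text \<open>\<open>contract \<phi> T\<close> is \<open>(id \<otimes> \<phi>) T\<close>.\<close>

definition contract :: "(('m \<Rightarrow> 'k) \<Rightarrow> 'k) \<Rightarrow> ('m \<times> 'm \<Rightarrow> 'k) \<Rightarrow> 'm \<Rightarrow> 'k" where
  "contract \<phi> T = (\<lambda>k. \<phi> (\<lambda>n. T (k, n)))"

lemma contract_sum:
  assumes "linear_form \<phi>"
  shows "contract \<phi> (\<lambda>p. \<Sum>a\<in>A. c a * T a p) = (\<lambda>k. \<Sum>a\<in>A. c a * contract \<phi> (T a) k)"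
proof
  fix k
  show "contract \<phi> (\<lambda>p. \<Sum>a\<in>A. c a * T a p) k = (\<Sum>a\<in>A. c a * contract \<phi> (T a) k)"
    using linear_form_sum[OF assms, where h = "\<lambda>a n. T a (k, n)"] by (simp add: contract_def)
qed

lemma contract_mem_of_lspan:
  assumes S: "subsp S" and \<phi>: "linear_form \<phi>" and T: "T \<in> lspan X"
    and X: "\<forall>t\<in>X. \<exists>a b. t = tens a b \<and> (a \<in> S \<or> \<phi> b = 0)"
  shows "contract \<phi> T \<in> S"
proof -
  obtain A c where A: "A \<subseteq> X" and T_eq: "T = (\<lambda>p. \<Sum>t\<in>A. c t * t p)"
    using T unfolding lspan_def by blast
  have "\<forall>t\<in>A. \<exists>a b. t = tens a b \<and> (a \<in> S \<or> \<phi> b = 0)"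
    using A X by blast
  then obtain a b where ab: "\<forall>t\<in>A. t = tens (a t) (b t) \<and> (a t \<in> S \<or> \<phi> (b t) = 0)"
    by metis
  have "contract \<phi> t = (\<lambda>k. \<phi> (b t) * a t k)" if "t \<in> A" for t
  proof -
    have "contract \<phi> t = contract \<phi> (tens (a t) (b t))"
      using ab that by metis
    also have "\<dots> = (\<lambda>k. \<phi> (\<lambda>n. a t k * b t n))"
      by (simp add: contract_def tens_def)
    finally show ?thesis
      by (simp add: linear_form_scale[OF \<phi>] mult.commute)
  qed
  then have "contract \<phi> T = (\<lambda>k. \<Sum>t\<in>A. c t * (\<phi> (b t) * a t k))"
    unfolding T_eq contract_sum[OF \<phi>] by (simp add: fun_eq_iff)
  also have "\<dots> \<in> S"
  proof (rule subsp_sum[OF S], intro ballI)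
    fix t
    assume "t \<in> A"
    then show "(\<lambda>k. c t * (\<phi> (b t) * a t k)) \<in> S"
      using ab subsp_scale[OF S] subsp_zero[OF S] by (cases "a t \<in> S") (auto simp: mult.assoc[symmetric])
  qed
  finally show ?thesis .
qed

lemma right_coideal_contract_Delta:
  assumes "right_coideal B q C" "x \<in> C" "linear_form \<phi>" "\<forall>u\<in>serre_ideal B q. \<phi> u = 0"
  shows "contract \<phi> (Delta B q x) \<in> C"
  using assms unfolding right_coideal_def
  by (intro contract_mem_of_lspan[where X = "{tens a b | a b. a \<in> C \<and> b \<in> fin} \<union>
    {tens a b | a b. a \<in> fin \<and> b \<in> serre_ideal B q}"]) auto

lemma left_coideal_contract_Delta:
  assumes "left_coideal B q J" "x \<in> J" "linear_form \<phi>" "\<forall>u\<in>J. \<phi> u = 0"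
    and "subsp C" "serre_ideal B q \<subseteq> C"
  shows "contract \<phi> (Delta B q x) \<in> C"
  using assms unfolding left_coideal_def
  by (intro contract_mem_of_lspan[where X = "{tens a b | a b. a \<in> fin \<and> b \<in> J} \<union>
    {tens a b | a b. a \<in> serre_ideal B q \<and> b \<in> fin}"]) auto

lemma contract_Delta:
  "linear_form \<phi> \<Longrightarrow>
    contract \<phi> (Delta B q f) = (\<lambda>k. \<Sum>m\<in>supp f. f m * contract \<phi> (Dmon B q (fst m) (snd m)) k)"
  unfolding Delta_def by (rule contract_sum)

lemma Delta_eq_sum_pr:
  assumes "\<forall>m\<in>supp x. snd m = \<beta>" "finite (supp x)" "finite A" "(\<lambda>m. deg (fst m)) ` supp x \<subseteq> A"
  shows "Delta B q x = (\<lambda>p. \<Sum>\<alpha>\<in>A. Delta B q (pr \<alpha> \<beta> x) p)"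
proof
  fix p
  have "Delta B q (pr \<alpha> \<beta> x) p = (\<Sum>m\<in>{m \<in> supp x. deg (fst m) = \<alpha>}. x m * Dmon B q (fst m) (snd m) p)"
    for \<alpha>
    using assms(1) unfolding Delta_def supp_pr by (intro sum.cong) (auto simp: pr_def)
  then show "Delta B q x p = (\<Sum>\<alpha>\<in>A. Delta B q (pr \<alpha> \<beta> x) p)"
    unfolding Delta_def using sum.group[OF assms(2-4), where h = "\<lambda>m. x m * Dmon B q (fst m) (snd m) p"]
    by simp
qed

lemma contract_pr_Delta_top:
  fixes B :: "'i::finite \<Rightarrow> 'i \<Rightarrow> int" and \<phi> :: "('i mon \<Rightarrow> 'k::field) \<Rightarrow> 'k"
  assumes "linear_form \<phi>" "finite (supp f)" "\<forall>m\<in>supp f. deg (fst m) = \<gamma> \<and> snd m = \<beta>"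
  shows "contract (\<lambda>u. \<phi> (pr \<gamma> \<beta> u)) (Delta B q f) = (\<lambda>k. \<phi> f * Kel (\<lambda>j. \<beta> j + \<gamma> j) k)"
proof
  fix k
  have "contract (\<lambda>u. \<phi> (pr \<gamma> \<beta> u)) (Delta B q f) k
      = (\<Sum>m\<in>supp f. f m * (if k = ([], \<lambda>j. \<beta> j + \<gamma> j) then \<phi> (mono m) else 0))"
    unfolding contract_Delta[OF linear_form_comp_pr[OF assms(1)]]
    using assms(3) by (intro sum.cong) (auto simp: contract_def pr_Dmon_slice_top linear_form_zero[OF assms(1)])
  also have "\<dots> = (if k = ([], \<lambda>j. \<beta> j + \<gamma> j) then \<phi> (\<lambda>n. \<Sum>m\<in>supp f. f m * mono m n) else 0)"
    by (simp add: linear_form_sum[OF assms(1)])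
  also have "\<dots> = \<phi> f * Kel (\<lambda>j. \<beta> j + \<gamma> j) k"
    unfolding sum_mono_expansion[OF assms(2)] by (simp add: Kel_def mono_def)
  finally show "contract (\<lambda>u. \<phi> (pr \<gamma> \<beta> u)) (Delta B q f) k = \<phi> f * Kel (\<lambda>j. \<beta> j + \<gamma> j) k" .
qed

lemma contract_pr_Delta_below:
  fixes B :: "'i::finite \<Rightarrow> 'i \<Rightarrow> int" and \<phi> :: "('i mon \<Rightarrow> 'k::field) \<Rightarrow> 'k"
  assumes "linear_form \<phi>" "\<forall>m\<in>supp f. \<not> (\<forall>j. \<gamma> j \<le> deg (fst m) j)"
  shows "contract (\<lambda>u. \<phi> (pr \<gamma> \<beta> u)) (Delta B q f) = (\<lambda>_. 0)"
  unfolding contract_Delta[OF linear_form_comp_pr[OF assms(1)]]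
  using assms(2) by (simp add: contract_def pr_Dmon_slice_below linear_form_zero[OF assms(1)])

lemma contract_pr_Delta_decompose:
  fixes B :: "'i::finite \<Rightarrow> 'i \<Rightarrow> int" and \<phi> :: "('i mon \<Rightarrow> 'k::field) \<Rightarrow> 'k"
  assumes "linear_form \<phi>" "finite (supp x)" "\<forall>m\<in>supp x. snd m = \<beta>"
  shows "contract (\<lambda>u. \<phi> (pr \<gamma> \<beta> u)) (Delta B q x)
    = (\<lambda>k. \<phi> (pr \<gamma> \<beta> x) * Kel (\<lambda>j. \<beta> j + \<gamma> j) k
        + (\<Sum>\<alpha>\<in>(\<lambda>m. deg (fst m)) ` supp x - {\<gamma>}. contract (\<lambda>u. \<phi> (pr \<gamma> \<beta> u)) (Delta B q (pr \<alpha> \<beta> x)) k))"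
proof -
  define G where "G = (\<lambda>m. deg (fst m)) ` supp x - {\<gamma>}"
  have G: "finite G" "\<gamma> \<notin> G"
    using assms(2) by (simp_all add: G_def)
  have pr_x: "finite (supp (pr \<gamma> \<beta> x))" "\<forall>m\<in>supp (pr \<gamma> \<beta> x). deg (fst m) = \<gamma> \<and> snd m = \<beta>"
    using assms(2) by (simp_all add: supp_pr)
  have "Delta B q x = (\<lambda>p. \<Sum>\<alpha>\<in>insert \<gamma> G. 1 * Delta B q (pr \<alpha> \<beta> x) p)"
    using Delta_eq_sum_pr[OF assms(3,2), of "insert \<gamma> G"] assms(2) by (auto simp: G_def)
  then have "contract (\<lambda>u. \<phi> (pr \<gamma> \<beta> u)) (Delta B q x)
      = (\<lambda>k. \<Sum>\<alpha>\<in>insert \<gamma> G. 1 * contract (\<lambda>u. \<phi> (pr \<gamma> \<beta> u)) (Delta B q (pr \<alpha> \<beta> x)) k)"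
    by (simp only: contract_sum[OF linear_form_comp_pr[OF assms(1)]])
  then show ?thesis
    unfolding G_def[symmetric] by (simp add: G contract_pr_Delta_top[OF assms(1) pr_x])
qed

lemma contract_pr_Delta_other_mem:
  fixes B :: "'i::finite \<Rightarrow> 'i \<Rightarrow> int" and \<phi> :: "('i mon \<Rightarrow> 'k::field) \<Rightarrow> 'k"
  assumes "left_coideal B q J" "subsp C" "serre_ideal B q \<subseteq> C"
    and "linear_form \<phi>" "\<forall>u\<in>J. \<phi> (pr \<gamma> \<beta> u) = 0"
    and "\<alpha> \<noteq> \<gamma>" "rprec \<gamma> \<alpha> \<Longrightarrow> pr \<alpha> \<beta> x \<in> J"
  shows "contract (\<lambda>u. \<phi> (pr \<gamma> \<beta> u)) (Delta B q (pr \<alpha> \<beta> x)) \<in> C"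
proof (cases "rprec \<gamma> \<alpha>")
  case True
  then show ?thesis
    using assms by (intro left_coideal_contract_Delta linear_form_comp_pr) auto
next
  case False
  with assms(6) have "\<forall>m\<in>supp (pr \<alpha> \<beta> x). \<not> (\<forall>j. \<gamma> j \<le> deg (fst m) j)"
    by (auto simp: rprec_def supp_pr)
  then show ?thesis
    using contract_pr_Delta_below[OF assms(4)] subsp_zero[OF assms(2)] by simp
qed

theorem mainTheorem10:
  fixes B :: "'i::finite \<Rightarrow> 'i \<Rightarrow> int" and q :: "'k::field"
    and C J :: "('i list \<times> ('i \<Rightarrow> int) \<Rightarrow> 'k) set"
    and x :: "'i list \<times> ('i \<Rightarrow> int) \<Rightarrow> 'k"
    and \<beta> \<gamma> :: "'i \<Rightarrow> int"
  assumes "semisimple_form B"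
    and "q \<noteq> 0" and "\<forall>n>0. q ^ n \<noteq> 1"
    and "right_coideal B q C"
    and "x \<in> C" and "\<forall>m\<in>supp x. snd m = \<beta>" and "x \<notin> serre_ideal B q"
    and "left_coideal B q J" and "homogeneous J"
    and "pr \<gamma> \<beta> x \<notin> J"
    and "\<forall>\<gamma>'. rprec \<gamma> \<gamma>' \<longrightarrow> pr \<gamma>' \<beta> x \<in> J"
  shows "Kel (\<lambda>i. \<beta> i + \<gamma> i) \<in> C"
proof -
  have C: "subsp C" "serre_ideal B q \<subseteq> C" and J: "subsp J" "serre_ideal B q \<subseteq> J"
    using assms(4,8) by (simp_all add: right_coideal_def left_coideal_def)
  obtain \<phi> where \<phi>: "linear_form \<phi>" "\<forall>u\<in>J. \<phi> u = 0" "\<phi> (pr \<gamma> \<beta> x) \<noteq> 0"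
    using separating_linear_form[OF J(1) assms(10)] by blast
  have \<phi>_pr_J: "\<forall>u\<in>J. \<phi> (pr \<gamma> \<beta> u) = 0"
    using \<phi>(2) assms(9) by (simp add: homogeneous_def)
  have "finite (supp x)"
    using assms(5) C(1) by (auto simp: subsp_def fin_def)
  define r where "r = (\<lambda>k. \<Sum>\<alpha>\<in>(\<lambda>m. deg (fst m)) ` supp x - {\<gamma>}.
    contract (\<lambda>u. \<phi> (pr \<gamma> \<beta> u)) (Delta B q (pr \<alpha> \<beta> x)) k)"
  have "contract (\<lambda>u. \<phi> (pr \<gamma> \<beta> u)) (Delta B q x) \<in> C"
    using \<phi>_pr_J J(2) by (intro right_coideal_contract_Delta[OF assms(4,5) linear_form_comp_pr[OF \<phi>(1)]]) blast
  then have "(\<lambda>k. \<phi> (pr \<gamma> \<beta> x) * Kel (\<lambda>j. \<beta> j + \<gamma> j) k + r k) \<in> C"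
    unfolding contract_pr_Delta_decompose[OF \<phi>(1) \<open>finite (supp x)\<close> assms(6)] r_def .
  moreover have "r \<in> C"
    unfolding r_def
  proof (rule subsp_sum[OF C(1)], intro ballI)
    fix \<alpha>
    assume "\<alpha> \<in> (\<lambda>m. deg (fst m)) ` supp x - {\<gamma>}"
    then show "contract (\<lambda>u. \<phi> (pr \<gamma> \<beta> u)) (Delta B q (pr \<alpha> \<beta> x)) \<in> C"
      using assms(11) by (intro contract_pr_Delta_other_mem[OF assms(8) C \<phi>(1) \<phi>_pr_J]) auto
  qed
  ultimately show ?thesis
    using subsp_cancel[OF C(1)] \<phi>(3) by blast
qed

end
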